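(* Let $k\ge 4$, $n=2k-1$, and $\lambda\in\overline{\mathcal{U}}_{T_n}$. Then the Young diagram $\mathrm{KN}(S_\lambda)$ has exactly $3n-3$ cells; consequently the sum of the hook lengths of the cells on its main diagonal is $3n-3$.
   Context: A partition of $N$ into distinct parts is a sequence $\lambda=(\lambda_1<\dots<\lambda_t)$ of positive integers with sum $N$ and $t\ge 2$, identified with its set of parts. Missing parts: $\mathcal{M}_\lambda=\{1,\dots,\lambda_t\}\setminus\lambda$. $\lambda$ is refinable if two distinct missing parts sum to a part of $\lambda$, unrefinable otherwise; $\mathcal{U}_N$ is the set of unrefinable partitions of $N$. An element of $\mathcal{U}_N$ is maximal if its largest part is the maximum of the largest parts of elements of $\mathcal{U}_N$; $\widetilde{\mathcal{U}}_N$ is the set of these and $\overline{\mathcal{U}}_N=\{\lambda\in\widetilde{\mathcal{U}}_N:\#\mathcal{M}_\lambda=\lfloor\lambda_t/2\rfloor\}$. $T_n=n(n+1)/2$. $S_\lambda=\mathbb{N}_0\setminus\lambda$. The Keith–Nath transformation sends a set $S\subseteq\mathbb{N}_0$ with $0\in S$ and finite complement to the Young diagram $\mathrm{KN}(S)$ whose boundary is the lattice path that, starting at the origin, takes for $j=0,1,\dots,\max(\mathbb{N}_0\setminus S)$ an east step if $j\in S$ and a north step otherwise (the region between this path, the vertical axis and the horizontal line at the path's final height). Diagrams are in English convention; the hook length of a cell is (cells to its right in its row) + (cells below it in its column) + 1; the main diagonal consists of the cells in row $i$ and column $i$. *)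

theory Defs
  imports Main
begin

text \<open>Partitions into distinct parts are represented by their (finite) sets of parts.\<close>

definition distinct_partition :: "nat \<Rightarrow> nat set \<Rightarrow> bool" where
  "distinct_partition N lam \<longleftrightarrow>
     finite lam \<and> 0 \<notin> lam \<and> \<Sum>lam = N \<and> card lam \<ge> 2"

definition largest_part :: "nat set \<Rightarrow> nat" where
  "largest_part lam = Max lam"

definition missing_parts :: "nat set \<Rightarrow> nat set" where
  "missing_parts lam = {1..largest_part lam} - lam"

definition refinable :: "nat set \<Rightarrow> bool" where
  "refinable lam \<longleftrightarrow>
     (\<exists>a\<in>missing_parts lam. \<exists>b\<in>missing_parts lam. a \<noteq> b \<and> a + b \<in> lam)"

definition unrefinable_parts :: "nat \<Rightarrow> nat set set" where
  "unrefinable_parts N = {lam. distinct_partition N lam \<and> \<not> refinable lam}"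

definition max_largest_part :: "nat \<Rightarrow> nat" where
  "max_largest_part N = Max (largest_part ` unrefinable_parts N)"

definition maximal_unrefinable :: "nat \<Rightarrow> nat set set" where
  "maximal_unrefinable N =
     {lam \<in> unrefinable_parts N. largest_part lam = max_largest_part N}"

definition maximal_unrefinable_bar :: "nat \<Rightarrow> nat set set" where
  "maximal_unrefinable_bar N =
     {lam \<in> maximal_unrefinable N. card (missing_parts lam) = largest_part lam div 2}"

definition triangular :: "nat \<Rightarrow> nat" where
  "triangular n = n * (n + 1) div 2"

definition S_of :: "nat set \<Rightarrow> nat set" where
  "S_of lam = UNIV - lam"

text \<open>A Young diagram is a set of cells (i, j), i = row
  (1 = top, English convention), j = column (1 = leftmost). The boundary path takes for
  j = 0, ..., max gap an east step if j is in S and a north step otherwise. The region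
  to the left of the path, below the final height, has, at the height of the r-th north
  step (gap g_r, gaps increasing), a row of length #{s in S. s < g_r}. In English
  convention the top row corresponds to the last north step, i.e. to the largest gap.
  So row i corresponds to the i-th largest gap.\<close>

definition gaps_desc :: "nat set \<Rightarrow> nat list" where
  "gaps_desc S = rev (sorted_list_of_set (UNIV - S))"

definition KN :: "nat set \<Rightarrow> (nat \<times> nat) set" where
  "KN S = {(i, j). 1 \<le> i \<and> i \<le> length (gaps_desc S) \<and> 1 \<le> j \<and>
                   j \<le> card {s \<in> S. s < gaps_desc S ! (i - 1)}}"

definition hook_length :: "(nat \<times> nat) set \<Rightarrow> nat \<times> nat \<Rightarrow> nat" where
  "hook_length D c =
     card {j'. j' > snd c \<and> (fst c, j') \<in> D} + card {i'. i' > fst c \<and> (i', snd c) \<in> D} + 1"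

definition main_diagonal :: "(nat \<times> nat) set \<Rightarrow> (nat \<times> nat) set" where
  "main_diagonal D = {c \<in> D. fst c = snd c}"

end

(* If lam is unrefinable with largest part L, then for every 0 < a < L/2 one of a, L - a is a
   part, since otherwise the two missing numbers a and L - a would sum to the part L. When exactly
   floor(L/2) numbers below L are missing, the fold x |-> min x (L - x) therefore maps the
   remaining parts bijectively onto {1..floor((L-1)/2)}, and
     sum lam = L + T(floor((L-1)/2)) + (excess of the parts above L/2).
   Comparing with sum lam = T(n) forces L <= 2n - 4: for L = 2n-3 the excess would be 2 with L
   odd, for L = 2n-2 it would be 1 with L even, and larger L overshoot T(n). The partition
   {1..n-3} + {n+1, 2n-4} attains 2n - 4, so lam has exactly n - 2 parts.
   The Keith-Nath diagram of S_lam has, for each part g, a row whose length is the number of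
   non-parts below g, so it has sum lam - C(n-2, 2) = T(n) - C(n-2, 2) = 3n - 3 cells; and in any
   Young diagram the hooks of the diagonal cells partition the diagram. *)

theory Submission
  imports Defs
begin

lemma two_triangular: "2 * triangular n = n * (n + 1)"
  unfolding triangular_def by simp

lemma triangular_minus_choose_two:
  assumes "2 \<le> n"
  shows "triangular n - ((n - 2) choose 2) = 3 * n - 3"
proof -
  obtain m where n: "n = m + 2"
    using assms le_Suc_ex by (metis add.commute)
  have "2 * (m choose 2) = m * (m - 1)"
    by (cases m) (simp_all add: choose_two)
  then have "2 * (m choose 2) + 2 * (3 * n - 3) = 2 * triangular n"
    unfolding two_triangular n by (cases m) (simp_all add: algebra_simps)
  then show ?thesis
    unfolding n by simp
qed

lemma sum_atLeast1_atMost_eq_triangular: "\<Sum>{1..n} = triangular n"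
  unfolding triangular_def using gauss_sum_from_Suc_0[of n, where ?'a = nat] by simp

section \<open>Keith--Nath diagrams and their diagonal hooks\<close>

lemma sum_card_less_eq_choose_two:
  fixes A :: "'a::linorder set"
  assumes "finite A"
  shows "(\<Sum>g\<in>A. card {p\<in>A. p < g}) = card A choose 2"
  using assms
proof (induction A rule: finite_linorder_max_induct)
  case empty
  then show ?case by simp
next
  case (insert b A)
  have "{p \<in> insert b A. p < b} = A"
    using insert.hyps(2) by auto
  moreover have "{p \<in> insert b A. p < g} = {p \<in> A. p < g}" if "g \<in> A" for g
    using that insert.hyps(2) by auto
  moreover have "b \<notin> A"
    using insert.hyps(2) by blast
  ultimately have "(\<Sum>g\<in>insert b A. card {p \<in> insert b A. p < g})
      = card A + (card A choose 2)"
    using insert by simp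
  also have "\<dots> = card (insert b A) choose 2"
    using insert.hyps(1) \<open>b \<notin> A\<close> by (simp add: numeral_2_eq_2)
  finally show ?case .
qed

lemma KN_eq_Sigma:
  "KN S = Sigma {1..length (gaps_desc S)} (\<lambda>i. {1..card {s \<in> S. s < gaps_desc S ! (i - 1)}})"
  unfolding KN_def by auto

lemma finite_KN: "finite (KN S)"
  unfolding KN_eq_Sigma by simp

lemma sorted_wrt_gaps_desc: "sorted_wrt (\<ge>) (gaps_desc S)"
  unfolding gaps_desc_def sorted_wrt_rev by simp

lemma KN_min_diagonal:
  assumes "(i, j) \<in> KN S"
  shows "(min i j, min i j) \<in> KN S"
proof (cases "i \<le> j")
  case True
  then show ?thesis using assms unfolding KN_def by auto
next
  case False
  let ?gs = "gaps_desc S"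
  have "i \<le> length ?gs" "1 \<le> j" using assms unfolding KN_def by auto
  then have "?gs ! (i - 1) \<le> ?gs ! (j - 1)"
    using False sorted_wrt_gaps_desc[of S] by (intro sorted_wrt_nth_less[where P="(\<ge>)"]) auto
  then have "card {s \<in> S. s < ?gs ! (i - 1)} \<le> card {s \<in> S. s < ?gs ! (j - 1)}"
    by (intro card_mono) auto
  then show ?thesis using False assms unfolding KN_def by auto
qed

lemma card_KN:
  assumes "finite (UNIV - S)"
  shows "card (KN S) = (\<Sum>g\<in>UNIV - S. card {s \<in> S. s < g})"
proof -
  let ?gs = "gaps_desc S" and ?row = "\<lambda>g. card {s \<in> S. s < g}"
  have "card (KN S) = (\<Sum>i=1..length ?gs. ?row (?gs ! (i - 1)))"
    unfolding KN_eq_Sigma by simp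
  also have "\<dots> = (\<Sum>i<length ?gs. ?row (?gs ! i))"
    by (rule sum.reindex_bij_witness[where i="\<lambda>i. i + 1" and j="\<lambda>i. i - 1"]) auto
  also have "\<dots> = sum_list (map ?row ?gs)"
    by (simp add: sum_list_sum_nth atLeast0LessThan)
  also have "\<dots> = (\<Sum>g\<in>UNIV - S. ?row g)"
    using assms by (simp add: gaps_desc_def rev_map[symmetric] sum_list_distinct_conv_sum_set)
  finally show ?thesis .
qed

lemma card_KN_S_of:
  assumes "finite lam"
  shows "card (KN (S_of lam)) = \<Sum>lam - (card lam choose 2)"
proof -
  have card_gaps_below: "card {s \<in> S_of lam. s < g} = g - card {p \<in> lam. p < g}" for g
  proof -
    have "{s \<in> S_of lam. s < g} = {..<g} - {p \<in> lam. p < g}"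
      unfolding S_of_def by auto
    then show ?thesis by (simp add: card_Diff_subset subset_eq)
  qed
  have parts_below: "card {p \<in> lam. p < g} \<le> g" for g
    using card_mono[of "{..<g}" "{p \<in> lam. p < g}"] by auto
  have "UNIV - S_of lam = lam"
    unfolding S_of_def by auto
  then have "card (KN (S_of lam)) = (\<Sum>g\<in>lam. g - card {p \<in> lam. p < g})"
    using assms by (simp add: card_KN card_gaps_below)
  also have "\<dots> = \<Sum>lam - (\<Sum>g\<in>lam. card {p \<in> lam. p < g})"
    using parts_below by (simp add: sum_subtractf_nat)
  finally show ?thesis
    using assms by (simp add: sum_card_less_eq_choose_two)
qed

lemma sum_hook_length_main_diagonal:
  assumes "finite D"
    and diagonal_closed: "\<And>i j. (i, j) \<in> D \<Longrightarrow> (min i j, min i j) \<in> D"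
  shows "(\<Sum>c\<in>main_diagonal D. hook_length D c) = card D"
proof -
  \<comment> \<open>the cell (i, j) lies in the hook of the diagonal cell (min i j, min i j)\<close>
  define diag where "diag c = (min (fst c) (snd c), min (fst c) (snd c))" for c :: "nat \<times> nat"
  have card_hook: "card {c \<in> D. diag c = (m, m)} = hook_length D (m, m)"
    if "(m, m) \<in> D" for m
  proof -
    define arm where "arm = Pair m ` {j. m < j \<and> (m, j) \<in> D}"
    define leg where "leg = (\<lambda>i. (i, m)) ` {i. m < i \<and> (i, m) \<in> D}"
    have "{c \<in> D. diag c = (m, m)} = insert (m, m) (arm \<union> leg)"
      using that unfolding arm_def leg_def diag_def by (auto simp: min_def split: if_splits)
    moreover have "finite arm" "finite leg" "arm \<inter> leg = {}" "(m, m) \<notin> arm \<union> leg"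
      using \<open>finite D\<close> unfolding arm_def leg_def
      by (auto intro: finite_subset[OF _ \<open>finite D\<close>])
    moreover have "card arm = card {j. m < j \<and> (m, j) \<in> D}"
      unfolding arm_def by (simp add: card_image inj_on_def)
    moreover have "card leg = card {i. m < i \<and> (i, m) \<in> D}"
      unfolding leg_def by (simp add: card_image inj_on_def)
    ultimately show ?thesis
      unfolding hook_length_def by (simp add: card_Un_disjoint)
  qed
  have "diag ` D \<subseteq> main_diagonal D"
    using diagonal_closed unfolding diag_def main_diagonal_def by auto
  moreover have "finite (main_diagonal D)"
    using \<open>finite D\<close> unfolding main_diagonal_def by simp
  ultimately have "card D = (\<Sum>c\<in>main_diagonal D. card {x \<in> D. diag x = c})"
    using sum.group[OF \<open>finite D\<close>, of "main_diagonal D" diag "\<lambda>_. 1::nat"] by simp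
  also have "\<dots> = (\<Sum>c\<in>main_diagonal D. hook_length D c)"
    by (rule sum.cong) (auto simp: main_diagonal_def card_hook)
  finally show ?thesis by simp
qed

section \<open>Unrefinable partitions missing half of the numbers below the largest part\<close>

lemma parts_subset_atLeast1_atMost_largest_part:
  assumes "finite lam" and "0 \<notin> lam"
  shows "lam \<subseteq> {1..largest_part lam}"
  using assms by (auto simp: largest_part_def Suc_le_eq intro: gr0I)

lemma card_missing_parts:
  assumes "finite lam" and "0 \<notin> lam"
  shows "card lam + card (missing_parts lam) = largest_part lam"
proof -
  have "lam \<subseteq> {1..largest_part lam}"
    using assms by (rule parts_subset_atLeast1_atMost_largest_part)
  then show ?thesis
    unfolding missing_parts_def using assms(1) card_mono[of "{1..largest_part lam}" lam]
    by (simp add: card_Diff_subset)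
qed

lemma unrefinable_mem_or_complement_mem:
  assumes "\<not> refinable lam" and "largest_part lam \<in> lam"
    and "0 < a" and "2 * a < largest_part lam"
  shows "a \<in> lam \<or> largest_part lam - a \<in> lam"
proof (rule ccontr)
  assume "\<not> ?thesis"
  then have "a \<in> missing_parts lam" "largest_part lam - a \<in> missing_parts lam"
    using assms(3,4) unfolding missing_parts_def by auto
  moreover have "a \<noteq> largest_part lam - a" "a + (largest_part lam - a) \<in> lam"
    using assms(2,4) by auto
  ultimately show False
    using assms(1) unfolding refinable_def by blast
qed

lemma bij_betw_fold_unrefinable:
  fixes lam :: "nat set"
  defines "L \<equiv> largest_part lam"
  assumes "finite lam" and "0 \<notin> lam" and "lam \<noteq> {}" and "\<not> refinable lam"
    and "card (missing_parts lam) = L div 2"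
  shows "bij_betw (\<lambda>x. min x (L - x)) (lam - {L}) {1..(L - 1) div 2}"
proof -
  let ?fold = "\<lambda>x. min x (L - x)" and ?h = "(L - 1) div 2"
  have "L \<in> lam"
    using assms(2,4) unfolding L_def largest_part_def by simp
  have card_rest: "card (lam - {L}) = ?h"
    using assms(2,3,6) card_missing_parts[of lam] \<open>L \<in> lam\<close> unfolding L_def by auto
  have "{1..?h} \<subseteq> ?fold ` (lam - {L})"
  proof
    fix a assume "a \<in> {1..?h}"
    then have "0 < a" "2 * a < L" by auto
    then consider "a \<in> lam" | "L - a \<in> lam"
      using unrefinable_mem_or_complement_mem[OF assms(5)] \<open>L \<in> lam\<close> unfolding L_def by blast
    then show "a \<in> ?fold ` (lam - {L})"
    proof cases
      case 1
      then show ?thesis using \<open>0 < a\<close> \<open>2 * a < L\<close> by (intro image_eqI[of _ _ a]) auto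
    next
      case 2
      then show ?thesis using \<open>0 < a\<close> \<open>2 * a < L\<close> by (intro image_eqI[of _ _ "L - a"]) auto
    qed
  qed
  moreover have "card (?fold ` (lam - {L})) \<le> ?h"
    using card_image_le[of "lam - {L}" ?fold] assms(2) card_rest by simp
  ultimately have image: "?fold ` (lam - {L}) = {1..?h}"
    using assms(2) by (intro card_seteq[symmetric]) auto
  then have "inj_on ?fold (lam - {L})"
    using assms(2) card_rest by (intro eq_card_imp_inj_on) auto
  with image show ?thesis
    unfolding bij_betw_def by simp
qed

lemma sum_unrefinable_half_missing:
  fixes lam :: "nat set"
  defines "L \<equiv> largest_part lam"
  assumes "finite lam" and "0 \<notin> lam" and "lam \<noteq> {}" and "\<not> refinable lam"
    and "card (missing_parts lam) = L div 2"
  shows "\<Sum>lam = L + triangular ((L - 1) div 2) + (\<Sum>x\<in>lam - {L}. 2 * x - L)"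
proof -
  have "L \<in> lam" and le_L: "\<And>x. x \<in> lam \<Longrightarrow> x \<le> L"
    using assms(2,4) unfolding L_def largest_part_def by auto
  have "(\<Sum>x\<in>lam - {L}. min x (L - x)) = \<Sum>{1..(L - 1) div 2}"
    using sum.reindex_bij_betw[OF bij_betw_fold_unrefinable[OF assms(2-6)[unfolded L_def]]]
    unfolding L_def by simp
  also have "\<dots> = triangular ((L - 1) div 2)"
    by (rule sum_atLeast1_atMost_eq_triangular)
  \<comment> \<open>truncated subtraction: 2 * x - L is the excess of x over L - x, and 0 below L/2\<close>
  moreover have "x = min x (L - x) + (2 * x - L)" if "x \<le> L" for x
    using that by linarith
  then have "\<Sum>(lam - {L}) = (\<Sum>x\<in>lam - {L}. min x (L - x) + (2 * x - L))"
    using le_L by (intro sum.cong) auto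
  then have "\<Sum>(lam - {L}) = (\<Sum>x\<in>lam - {L}. min x (L - x)) + (\<Sum>x\<in>lam - {L}. 2 * x - L)"
    by (simp add: sum.distrib)
  ultimately show ?thesis
    using assms(2) \<open>L \<in> lam\<close>
    by (simp add: sum.remove)
qed

lemma even_sum_double_minus:
  fixes L :: nat
  assumes "even L"
  shows "even (\<Sum>x\<in>A. 2 * x - L)"
  using assms by (intro dvd_sum) auto

lemma sum_double_minus_odd_neq_2:
  fixes L :: nat
  assumes "finite A" and "odd L"
  shows "(\<Sum>x\<in>A. 2 * x - L) \<noteq> 2"
proof
  assume sum_2: "(\<Sum>x\<in>A. 2 * x - L) = 2"
  have "2 * x - L \<le> (if x = Suc L div 2 then 1 else 0)" if "x \<in> A" for x
  proof -
    have "2 * x - L \<le> 2"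
      using member_le_sum[OF that _ assms(1), of "\<lambda>x. 2 * x - L"] sum_2 by simp
    then show ?thesis
      using assms(2) by presburger
  qed
  then have "(\<Sum>x\<in>A. 2 * x - L) \<le> (\<Sum>x\<in>A. if x = Suc L div 2 then 1 else 0)"
    by (rule sum_mono)
  also have "\<dots> \<le> 1"
    using assms(1) by (simp add: sum.delta)
  finally show False
    using sum_2 by simp
qed

lemma largest_part_le_if_half_missing:
  assumes "lam \<in> unrefinable_parts (triangular n)"
    and "card (missing_parts lam) = largest_part lam div 2" and "2 \<le> n"
  shows "largest_part lam \<le> 2 * n - 4"
proof (rule ccontr)
  define L where "L = largest_part lam"
  define h where "h = (L - 1) div 2"
  define E where "E = (\<Sum>x\<in>lam - {L}. 2 * x - L)"
  have "finite lam" "0 \<notin> lam" "lam \<noteq> {}" "\<not> refinable lam" "\<Sum>lam = triangular n"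
    using assms(1) unfolding unrefinable_parts_def distinct_partition_def by auto
  then have "triangular n = L + triangular h + E"
    using sum_unrefinable_half_missing assms(2) unfolding L_def h_def E_def by simp
  then have identity: "n * (n + 1) = 2 * L + h * (h + 1) + 2 * E"
    using two_triangular[of n] two_triangular[of h] by simp
  have "finite (lam - {L})"
    using \<open>finite lam\<close> by simp
  obtain m where m: "n = m + 2"
    using assms(3) le_Suc_ex by (metis add.commute)
  assume "\<not> L \<le> 2 * n - 4"
  then consider "L = 2 * n - 3" | "L = 2 * n - 2" | "2 * n - 1 \<le> L"
    unfolding L_def by linarith
  then show False
  proof cases
    case 1
    then have "h = n - 2" and "odd L"
      using assms(3) unfolding h_def by auto
    then have "E = 2"
      using identity 1 m by (simp add: algebra_simps)
    then show False
      using sum_double_minus_odd_neq_2[OF \<open>finite (lam - {L})\<close> \<open>odd L\<close>] unfolding E_def by simp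
  next
    case 2
    then have "h = n - 2" and "even L"
      using assms(3) unfolding h_def by auto
    then have "E = 1"
      using identity 2 m by (simp add: algebra_simps)
    then show False
      using even_sum_double_minus[OF \<open>even L\<close>, of "lam - {L}"] unfolding E_def by simp
  next
    case 3
    then have "n - 1 \<le> h"
      unfolding h_def by linarith
    then have "(n - 1) * n \<le> h * (h + 1)"
      using assms(3) by (intro mult_mono) auto
    then show False
      using identity 3 m by (simp add: algebra_simps)
  qed
qed

lemma finite_unrefinable_parts: "finite (unrefinable_parts N)"
proof (rule finite_subset)
  show "unrefinable_parts N \<subseteq> Pow {..N}"
    unfolding unrefinable_parts_def distinct_partition_def
    by (auto intro: member_le_sum[where f = id, simplified])
qed simp

lemma unrefinable_witness:
  fixes n :: nat
  defines "W \<equiv> {1..n - 3} \<union> {n + 1, 2 * n - 4}"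
  assumes "6 \<le> n"
  shows "W \<in> unrefinable_parts (triangular n)" and "largest_part W = 2 * n - 4"
proof -
  obtain m where m: "n = m + 6"
    using assms(2) le_Suc_ex by (metis add.commute)
  have W: "W = {1..m + 3} \<union> {m + 7, 2 * m + 8}"
    unfolding W_def m by (simp add: add.commute)
  show largest: "largest_part W = 2 * n - 4"
    unfolding largest_part_def W m by (rule Max_eqI) auto
  have "\<Sum>W = triangular (m + 3) + (m + 7) + (2 * m + 8)"
    using sum_atLeast1_atMost_eq_triangular[of "m + 3"] unfolding W by simp
  then have "2 * \<Sum>W = n * (n + 1)"
    using two_triangular[of "m + 3"] unfolding m by (simp add: algebra_simps)
  then have "\<Sum>W = triangular n"
    using two_triangular[of n] by simp
  moreover have "card W \<ge> 2"
    using card_mono[of W "{m + 7, 2 * m + 8}"] unfolding W by simp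
  moreover have "\<not> refinable W"
  proof
    assume "refinable W"
    then obtain a b where ab: "a \<in> missing_parts W" "b \<in> missing_parts W" "a \<noteq> b" "a + b \<in> W"
      unfolding refinable_def by blast
    have "m + 4 \<le> x" if "x \<in> missing_parts W" for x
      using that unfolding missing_parts_def W by auto
    then have "m + 4 \<le> a" "m + 4 \<le> b"
      using ab(1,2) by blast+
    moreover have "a + b \<le> 2 * m + 8"
      using ab(4) unfolding W by auto
    ultimately show False
      using ab(3) by linarith
  qed
  ultimately show "W \<in> unrefinable_parts (triangular n)"
    unfolding unrefinable_parts_def distinct_partition_def W by auto
qed

lemma max_largest_part_ge:
  assumes "6 \<le> n"
  shows "2 * n - 4 \<le> max_largest_part (triangular n)"
  unfolding max_largest_part_def
  using unrefinable_witness[OF assms] finite_unrefinable_parts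
  by (metis Max_ge finite_imageI imageI)

theorem proposition3p9:
  fixes k n :: nat and lam :: "nat set"
  assumes "k \<ge> 4" and "n = 2 * k - 1"
    and "lam \<in> maximal_unrefinable_bar (triangular n)"
  shows "card (KN (S_of lam)) = 3 * n - 3
    \<and> (\<Sum>c\<in>main_diagonal (KN (S_of lam)). hook_length (KN (S_of lam)) c) = 3 * n - 3"
proof -
  have "7 \<le> n"
    using assms(1,2) by simp
  have unrefinable: "lam \<in> unrefinable_parts (triangular n)"
    and half_missing: "card (missing_parts lam) = largest_part lam div 2"
    and maximal: "largest_part lam = max_largest_part (triangular n)"
    using assms(3) unfolding maximal_unrefinable_bar_def maximal_unrefinable_def by auto
  then have "finite lam" "0 \<notin> lam" "\<Sum>lam = triangular n"
    unfolding unrefinable_parts_def distinct_partition_def by auto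
  have "largest_part lam = 2 * n - 4"
    using largest_part_le_if_half_missing[OF unrefinable half_missing]
      max_largest_part_ge[of n] maximal \<open>7 \<le> n\<close> by simp
  then have "card lam = n - 2"
    using card_missing_parts[OF \<open>finite lam\<close> \<open>0 \<notin> lam\<close>] half_missing by simp
  then have "card (KN (S_of lam)) = 3 * n - 3"
    using card_KN_S_of[OF \<open>finite lam\<close>] \<open>\<Sum>lam = triangular n\<close>
      triangular_minus_choose_two \<open>7 \<le> n\<close> by simp
  moreover have "(\<Sum>c\<in>main_diagonal (KN (S_of lam)). hook_length (KN (S_of lam)) c)
      = card (KN (S_of lam))"
    using sum_hook_length_main_diagonal[OF finite_KN KN_min_diagonal] .
  ultimately show ?thesis
    by simp
qed

end
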